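(* Consider the model described in the context and suppose the Lipschitz assumption holds. Let $z_1(x)=\mathbb P(x_1=x)$, $x\in\mathcal X$. For $t\in\mathbb N_T$ let $\psi_t(z)\in\mathcal G$ be any minimizer of the right-hand side of $\hat V_t(z)=\min_{\gamma\in\mathcal G}\big(\hat c_t(z,\gamma)+\hat V_{t+1}(\hat f_t(z,\gamma))\big)$, and define the deterministic sequence $z_{t+1}=\hat f_t(z_t,\psi_t(z_t))$. Define the fully decentralized strategy $\mathbf g=\{g_t\}_{t=1}^T$ in which every agent $i$ uses $u^i_t=g_t(x^i_t)$ with $$g_t(x):=\psi_t(z_t)(x),\qquad x\in\mathcal X,\ t\in\mathbb N_T.$$ Then $|J(\mathbf g)-J^\ast|\le \epsilon(n)$ for some $\epsilon(n)\in\mathcal O(1/\sqrt n)$.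
   Context: Fix $n\in\mathbb N$ agents, a horizon $T\in\mathbb N$, and finite sets $\mathcal X$ (states), $\mathcal U$ (actions), $\mathcal W$ (noises); $\mathbb N_k=\{1,\dots,k\}$. Let $\mathcal I(\mathcal X)=[0,1]^{\mathcal X}$, $\Delta(\mathcal X)$ the set of probability vectors on $\mathcal X$, and $\mathcal M_n=\{m\in\Delta(\mathcal X): m(x)\in\{0,\tfrac1n,\dots,1\}\ \forall x\}$. Agent $i\in\mathbb N_n$ has state $x^i_t\in\mathcal X$ and action $u^i_t\in\mathcal U$ at time $t\in\mathbb N_T$; the mean-field is $m_t(x)=\frac1n\sum_{i=1}^n\mathbb 1(x^i_t=x)$. Dynamics: $x^i_{t+1}=f_t(x^i_t,u^i_t,w^i_t,m_t)$ with $f_t:\mathcal X\times\mathcal U\times\mathcal W\times\mathcal I(\mathcal X)\to\mathcal X$. The initial states $x^1_1,\dots,x^n_1$ are i.i.d. with law $\mathbb P(x_1=\cdot)$; for each $t$, $w^1_t,\dots,w^n_t$ are i.i.d. with common law $\mathbb P(w_t=\cdot)$; initial states and all noises are mutually independent. Transition probabilities: $\mathbb P(y\mid x,u,z)=\sum_{w\in\mathcal W}\mathbb 1(f_t(x,u,w,z)=y)\,\mathbb P(w_t=w)$ for $z\in\mathcal I(\mathcal X)$. Costs $\ell_t:\mathcal X\times\mathcal U\times\mathcal I(\mathcal X)\to\mathbb R_{\ge0}$. Lipschitz assumption: there are constants $K^1_t,K^2_t>0$ with $|\mathbb P(y|x,u,z_1)-\mathbb P(y|x,u,z_2)|\le K^1_t\|z_1-z_2\|_\infty$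 and $|\ell_t(x,u,z_1)-\ell_t(x,u,z_2)|\le K^2_t\|z_1-z_2\|_\infty$ for all $x,y\in\mathcal X,u\in\mathcal U,z_1,z_2\in\mathcal I(\mathcal X)$. For a strategy, its cost is $J=\mathbb E\big[\sum_{t=1}^T\frac1n\sum_{i=1}^n\ell_t(x^i_t,u^i_t,m_t)\big]$. $J^\ast$ is the optimal cost over mean-field sharing strategies, i.e. strategies of the form $u^i_t=g_t(x^i_t,m_t)$ with $g_t:\mathcal X\times\mathcal M_n\to\mathcal U$ common to all agents. $\mathcal G$ is the finite set of all maps $\gamma:\mathcal X\to\mathcal U$. For $z\in\mathcal I(\mathcal X)$, $\gamma\in\mathcal G$: $\hat f_t(z,\gamma)(y)=\sum_{x}z(x)\mathbb P(y|x,\gamma(x),z)$ and $\hat c_t(z,\gamma)=\sum_x z(x)\ell_t(x,\gamma(x),z)$. The functions $\hat V_t:\Delta(\mathcal X)\to\mathbb R$ are defined by $\hat V_{T+1}\equiv0$ and $\hat V_t(z)=\min_{\gamma\in\mathcal G}\big(\hat c_t(z,\gamma)+\hat V_{t+1}(\hat f_t(z,\gamma))\big)$ for $t=T,\dots,1$. All model data ($T,\mathcal X,\mathcal U,\mathcal W,f_t,\ell_t$, the laws of initial states and noises) do not depend on $n$; $\mathcal O(1/\sqrt n)$ denotes a quantity bounded by $C/\sqrt n$ with $C$ independent of $n$. *)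

theory Defs
  imports "HOL-Probability.Probability"
begin

text \<open>Model data (independent of n):
  f  :: nat => 'x => 'u => 'w => ('x => real) => 'x      dynamics f_t(x,u,w,z)
  l  :: nat => 'x => 'u => ('x => real) => real          costs ell_t(x,u,z)
  p0 :: 'x pmf                                           law of initial states
  pw :: nat => 'w pmf                                    law of noises at time t
  Agents are indexed by {0..<n}; a joint state is a function nat => 'x.\<close>

definition in_I :: "('x::finite \<Rightarrow> real) \<Rightarrow> bool" where
  "in_I z \<longleftrightarrow> (\<forall>x. 0 \<le> z x \<and> z x \<le> 1)"

definition in_Delta :: "('x::finite \<Rightarrow> real) \<Rightarrow> bool" where
  "in_Delta z \<longleftrightarrow> (\<forall>x. 0 \<le> z x) \<and> (\<Sum>x\<in>UNIV. z x) = 1"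

definition supnorm :: "('x::finite \<Rightarrow> real) \<Rightarrow> real" where
  "supnorm z = Max (range (\<lambda>x. \<bar>z x\<bar>))"

definition trans_prob ::
  "(nat \<Rightarrow> 'x \<Rightarrow> 'u \<Rightarrow> 'w::finite \<Rightarrow> ('x \<Rightarrow> real) \<Rightarrow> 'x) \<Rightarrow> (nat \<Rightarrow> 'w pmf)
     \<Rightarrow> nat \<Rightarrow> 'x \<Rightarrow> 'x \<Rightarrow> 'u \<Rightarrow> ('x \<Rightarrow> real) \<Rightarrow> real" where
  "trans_prob f pw t y x u z = (\<Sum>w\<in>UNIV. (if f t x u w z = y then 1 else 0) * pmf (pw t) w)"

definition mf :: "nat \<Rightarrow> (nat \<Rightarrow> 'x) \<Rightarrow> ('x \<Rightarrow> real)" where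
  "mf n xs = (\<lambda>x. real (card {i\<in>{0..<n}. xs i = x}) / real n)"

text \<open>Law of the joint state at time k+1 of n agents using the (common)
  strategy u^i_t = h t (x^i_t) (m_t).\<close>
primrec state_dist ::
  "(nat \<Rightarrow> 'x \<Rightarrow> 'u \<Rightarrow> 'w \<Rightarrow> ('x \<Rightarrow> real) \<Rightarrow> 'x) \<Rightarrow> 'x pmf \<Rightarrow> (nat \<Rightarrow> 'w pmf)
     \<Rightarrow> nat \<Rightarrow> (nat \<Rightarrow> 'x \<Rightarrow> ('x \<Rightarrow> real) \<Rightarrow> 'u) \<Rightarrow> nat \<Rightarrow> (nat \<Rightarrow> 'x) pmf" where
  "state_dist f p0 pw n h 0 = Pi_pmf {0..<n} undefined (\<lambda>_. p0)"
| "state_dist f p0 pw n h (Suc k) =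
     bind_pmf (state_dist f p0 pw n h k) (\<lambda>xs.
       Pi_pmf {0..<n} undefined (\<lambda>i.
         map_pmf (\<lambda>w. f (Suc k) (xs i) (h (Suc k) (xs i) (mf n xs)) w (mf n xs)) (pw (Suc k))))"

definition Jcost ::
  "nat \<Rightarrow> (nat \<Rightarrow> 'x \<Rightarrow> 'u \<Rightarrow> 'w \<Rightarrow> ('x \<Rightarrow> real) \<Rightarrow> 'x) \<Rightarrow> (nat \<Rightarrow> 'x \<Rightarrow> 'u \<Rightarrow> ('x \<Rightarrow> real) \<Rightarrow> real)
     \<Rightarrow> 'x pmf \<Rightarrow> (nat \<Rightarrow> 'w pmf) \<Rightarrow> nat \<Rightarrow> (nat \<Rightarrow> 'x \<Rightarrow> ('x \<Rightarrow> real) \<Rightarrow> 'u) \<Rightarrow> real" where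
  "Jcost T f l p0 pw n h =
     (\<Sum>t\<in>{1..T}. measure_pmf.expectation (state_dist f p0 pw n h (t - 1))
        (\<lambda>xs. (1 / real n) * (\<Sum>i\<in>{0..<n}. l t (xs i) (h t (xs i) (mf n xs)) (mf n xs))))"

text \<open>Optimal cost over mean-field sharing strategies u^i_t = g_t(x^i_t, m_t).\<close>
definition Jstar ::
  "nat \<Rightarrow> (nat \<Rightarrow> 'x \<Rightarrow> 'u \<Rightarrow> 'w \<Rightarrow> ('x \<Rightarrow> real) \<Rightarrow> 'x) \<Rightarrow> (nat \<Rightarrow> 'x \<Rightarrow> 'u \<Rightarrow> ('x \<Rightarrow> real) \<Rightarrow> real)
     \<Rightarrow> 'x pmf \<Rightarrow> (nat \<Rightarrow> 'w pmf) \<Rightarrow> nat \<Rightarrow> real" where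
  "Jstar T f l p0 pw n = (INF h. Jcost T f l p0 pw n h)"

definition hat_f ::
  "(nat \<Rightarrow> 'x::finite \<Rightarrow> 'u \<Rightarrow> 'w::finite \<Rightarrow> ('x \<Rightarrow> real) \<Rightarrow> 'x) \<Rightarrow> (nat \<Rightarrow> 'w pmf)
     \<Rightarrow> nat \<Rightarrow> ('x \<Rightarrow> real) \<Rightarrow> ('x \<Rightarrow> 'u) \<Rightarrow> ('x \<Rightarrow> real)" where
  "hat_f f pw t z \<gamma> = (\<lambda>y. \<Sum>x\<in>UNIV. z x * trans_prob f pw t y x (\<gamma> x) z)"

definition hat_c ::
  "(nat \<Rightarrow> 'x::finite \<Rightarrow> 'u \<Rightarrow> ('x \<Rightarrow> real) \<Rightarrow> real) \<Rightarrow> nat \<Rightarrow> ('x \<Rightarrow> real) \<Rightarrow> ('x \<Rightarrow> 'u) \<Rightarrow> real" where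
  "hat_c l t z \<gamma> = (\<Sum>x\<in>UNIV. z x * l t x (\<gamma> x) z)"

text \<open>Backward recursion: W k = hat V_(T+1-k), i.e. k steps before the end.\<close>
primrec Wval ::
  "nat \<Rightarrow> (nat \<Rightarrow> 'x::finite \<Rightarrow> 'u::finite \<Rightarrow> 'w::finite \<Rightarrow> ('x \<Rightarrow> real) \<Rightarrow> 'x)
     \<Rightarrow> (nat \<Rightarrow> 'x \<Rightarrow> 'u \<Rightarrow> ('x \<Rightarrow> real) \<Rightarrow> real) \<Rightarrow> (nat \<Rightarrow> 'w pmf)
     \<Rightarrow> nat \<Rightarrow> ('x \<Rightarrow> real) \<Rightarrow> real" where
  "Wval T f l pw 0 z = 0"
| "Wval T f l pw (Suc k) z =
     Min (range (\<lambda>\<gamma>. hat_c l (T - k) z \<gamma> + Wval T f l pw k (hat_f f pw (T - k) z \<gamma>)))"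

text \<open>hat V_t for t in {1..T+1}.\<close>
definition Vhat ::
  "nat \<Rightarrow> (nat \<Rightarrow> 'x::finite \<Rightarrow> 'u::finite \<Rightarrow> 'w::finite \<Rightarrow> ('x \<Rightarrow> real) \<Rightarrow> 'x)
     \<Rightarrow> (nat \<Rightarrow> 'x \<Rightarrow> 'u \<Rightarrow> ('x \<Rightarrow> real) \<Rightarrow> real) \<Rightarrow> (nat \<Rightarrow> 'w pmf)
     \<Rightarrow> nat \<Rightarrow> ('x \<Rightarrow> real) \<Rightarrow> real" where
  "Vhat T f l pw t z = Wval T f l pw (T + 1 - t) z"

text \<open>Deterministic trajectory: ztraj k = z_(k+1).\<close>
primrec ztraj ::
  "(nat \<Rightarrow> 'x::finite \<Rightarrow> 'u \<Rightarrow> 'w::finite \<Rightarrow> ('x \<Rightarrow> real) \<Rightarrow> 'x) \<Rightarrow> 'x pmf \<Rightarrow> (nat \<Rightarrow> 'w pmf)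
     \<Rightarrow> (nat \<Rightarrow> ('x \<Rightarrow> real) \<Rightarrow> ('x \<Rightarrow> 'u)) \<Rightarrow> nat \<Rightarrow> ('x \<Rightarrow> real)" where
  "ztraj f p0 pw \<psi> 0 = (\<lambda>x. pmf p0 x)"
| "ztraj f p0 pw \<psi> (Suc k) = hat_f f pw (Suc k) (ztraj f p0 pw \<psi> k) (\<psi> (Suc k) (ztraj f p0 pw \<psi> k))"

end

theory Submission
  imports Defs
begin

text \<open>Given the joint state at time t, the n agents move independently, so the next mean-field
  deviates from its conditional mean hat_f t (m t) \<gamma> by O(1/sqrt n) in expectation. Since
  hat_c, hat_f and hence hat_V are Lipschitz on the simplex, this gives two estimates. For every
  mean-field sharing strategy, hat_V t (m t) exceeds the expected stage cost plus
  E hat_V (t+1) (m (t+1)) by at most O(1/sqrt n), so J \<ge> hat_V 1 z_1 - O(1/sqrt n); this bounds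
  J* from below. Under the decentralized strategy, E ||m t - z t|| obeys an affine recursion
  started at O(1/sqrt n), so the cost is within O(1/sqrt n) of
  \<Sum>_t hat_c t z_t (\<psi> t z_t) = hat_V 1 z_1.\<close>

lemma abs_mult_diff_le:
  fixes a b c d :: real
  assumes "\<bar>a - c\<bar> \<le> s" "\<bar>b\<bar> \<le> B" "0 \<le> c" "c \<le> 1" "\<bar>b - d\<bar> \<le> K * s" "0 \<le> s"
  shows "\<bar>a * b - c * d\<bar> \<le> (B + K) * s"
proof -
  have "\<bar>a * b - c * d\<bar> = \<bar>(a - c) * b + c * (b - d)\<bar>" by (simp add: algebra_simps)
  also have "\<dots> \<le> \<bar>(a - c) * b\<bar> + \<bar>c * (b - d)\<bar>" by (rule abs_triangle_ineq)
  also have "\<dots> = \<bar>a - c\<bar> * \<bar>b\<bar> + c * \<bar>b - d\<bar>"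
    using assms(3) by (simp add: abs_mult)
  also have "\<dots> \<le> s * B + 1 * (K * s)"
    using assms by (intro add_mono mult_mono) auto
  finally show ?thesis by (simp add: algebra_simps)
qed

lemma abs_Min_range_diff_le:
  fixes F G :: "'g::finite \<Rightarrow> real"
  assumes "\<And>g. \<bar>F g - G g\<bar> \<le> e"
  shows "\<bar>Min (range F) - Min (range G)\<bar> \<le> e"
proof -
  have "Min (range F) \<in> range F" "Min (range G) \<in> range G" by (auto intro: Min_in)
  then obtain g1 g2 where g1: "Min (range F) = F g1" and g2: "Min (range G) = G g2" by blast
  have "Min (range G) \<le> G g1" "Min (range F) \<le> F g2" by (auto intro: Min_le)
  then show ?thesis using assms[of g1] assms[of g2] g1 g2 by linarith
qed

primrec affine_iterate :: "real \<Rightarrow> real \<Rightarrow> nat \<Rightarrow> real" where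
  "affine_iterate a b 0 = 0"
| "affine_iterate a b (Suc k) = a + b * affine_iterate a b k"

lemma affine_iterate_nonneg: "0 \<le> a \<Longrightarrow> 0 \<le> b \<Longrightarrow> 0 \<le> affine_iterate a b k"
  by (induction k) auto

lemma affine_iterate_mono:
  assumes "0 \<le> a" "0 \<le> b" "k \<le> k'"
  shows "affine_iterate a b k \<le> affine_iterate a b k'"
proof -
  have "affine_iterate a b k \<le> affine_iterate a b (Suc k)" for k
    by (induction k) (use assms in \<open>auto intro: mult_left_mono\<close>)
  then show ?thesis using lift_Suc_mono_le[of "affine_iterate a b"] assms(3) by blast
qed

lemma ex_uniform_constant:
  fixes P :: "'a \<Rightarrow> real \<Rightarrow> bool"
  assumes "finite A" and "\<forall>t\<in>A. \<exists>K>0. P t K"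
    and mono: "\<And>t K K'. P t K \<Longrightarrow> K \<le> K' \<Longrightarrow> P t K'"
  shows "\<exists>K\<ge>0. \<forall>t\<in>A. P t K"
proof -
  obtain Kt where Kt: "\<And>t. t \<in> A \<Longrightarrow> Kt t > 0 \<and> P t (Kt t)"
    using bchoice[OF assms(2)] by metis
  have "Kt t \<le> (\<Sum>s\<in>A. Kt s)" if "t \<in> A" for t
    using assms(1) that Kt by (intro member_le_sum) (auto simp: less_imp_le)
  moreover have "0 \<le> (\<Sum>s\<in>A. Kt s)"
    using Kt by (auto intro: sum_nonneg less_imp_le)
  ultimately show ?thesis using Kt mono by blast
qed

section \<open>The simplex and empirical distributions\<close>

lemma abs_le_supnorm: "\<bar>z x\<bar> \<le> supnorm (z::'x::finite \<Rightarrow> real)"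
  unfolding supnorm_def by (rule Max_ge) auto

lemma supnorm_nonneg: "0 \<le> supnorm (z::'x::finite \<Rightarrow> real)"
  using abs_le_supnorm[of z undefined] by linarith

lemma supnorm_leI: "(\<And>x. \<bar>z x\<bar> \<le> c) \<Longrightarrow> supnorm (z::'x::finite \<Rightarrow> real) \<le> c"
  unfolding supnorm_def by (subst Max_le_iff) auto

lemma supnorm_le_sum_abs: "supnorm (z::'x::finite \<Rightarrow> real) \<le> (\<Sum>x\<in>UNIV. \<bar>z x\<bar>)"
  by (rule supnorm_leI) (rule member_le_sum, auto)

lemma supnorm_triangle:
  "supnorm ((a::'x::finite \<Rightarrow> real) - c) \<le> supnorm (a - b) + supnorm (b - c)"
proof (rule supnorm_leI)
  fix x
  have "\<bar>(a - c) x\<bar> \<le> \<bar>(a - b) x\<bar> + \<bar>(b - c) x\<bar>" by simp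
  then show "\<bar>(a - c) x\<bar> \<le> supnorm (a - b) + supnorm (b - c)"
    using abs_le_supnorm[of "a - b" x] abs_le_supnorm[of "b - c" x] by linarith
qed

lemma in_Delta_imp_in_I: "in_Delta (z::'x::finite \<Rightarrow> real) \<Longrightarrow> in_I z"
  unfolding in_Delta_def in_I_def using member_le_sum[of _ UNIV z] by auto

lemma in_Delta_pmf: "in_Delta (pmf (p :: 'x::finite pmf))"
  unfolding in_Delta_def by (auto intro: sum_pmf_eq_1)

lemma average_eq_sum_mf:
  fixes xs :: "nat \<Rightarrow> 'x::finite" and F :: "'x \<Rightarrow> real"
  shows "(1 / real n) * (\<Sum>i\<in>{0..<n}. F (xs i)) = (\<Sum>x\<in>UNIV. mf n xs x * F x)"
proof -
  have "(\<Sum>i\<in>{0..<n}. F (xs i)) = (\<Sum>x\<in>UNIV. \<Sum>i\<in>{i\<in>{0..<n}. xs i = x}. F (xs i))"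
    by (rule sum.group[symmetric]) auto
  also have "\<dots> = (\<Sum>x\<in>UNIV. real (card {i\<in>{0..<n}. xs i = x}) * F x)"
    by (rule sum.cong) auto
  finally show ?thesis
    unfolding mf_def by (simp add: sum_distrib_left)
qed

lemma mf_in_Delta: "0 < n \<Longrightarrow> in_Delta (mf n (xs :: nat \<Rightarrow> 'x::finite))"
  using average_eq_sum_mf[of n "\<lambda>_. 1" xs] unfolding in_Delta_def by (auto simp: mf_def)

lemma mf_eq_average_indicator:
  "mf n xs y = (1 / real n) * (\<Sum>i\<in>{0..<n}. if xs i = y then 1 else 0)"
proof -
  have "{i\<in>{0..<n}. xs i = y} = {0..<n} \<inter> {i. xs i = y}" by auto
  then show ?thesis unfolding mf_def by (simp add: sum.If_cases)
qed

lemma hat_c_mf_eq_average: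
  "hat_c l t (mf n (xs :: nat \<Rightarrow> 'x::finite)) \<gamma>
     = (1 / real n) * (\<Sum>i\<in>{0..<n}. l t (xs i) (\<gamma> (xs i)) (mf n xs))"
  unfolding hat_c_def by (rule average_eq_sum_mf[symmetric])

lemma trans_prob_nonneg: "0 \<le> trans_prob f pw t y x u z"
  unfolding trans_prob_def by (auto intro: sum_nonneg)

lemma pmf_map_eq_trans_prob:
  "pmf (map_pmf (\<lambda>w. f t x u w z) (pw t)) y = trans_prob f (pw :: nat \<Rightarrow> 'w::finite pmf) t y x u z"
proof -
  have "pmf (map_pmf (\<lambda>w. f t x u w z) (pw t)) y = (\<Sum>w\<in>{w. f t x u w z = y}. pmf (pw t) w)"
    by (simp add: pmf_map vimage_def measure_measure_pmf_finite)
  also have "\<dots> = (\<Sum>w\<in>UNIV. if f t x u w z = y then pmf (pw t) w else 0)"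
    by (simp add: sum.If_cases)
  also have "\<dots> = trans_prob f pw t y x u z"
    unfolding trans_prob_def by (intro sum.cong) auto
  finally show ?thesis .
qed

lemma sum_trans_prob:
  "(\<Sum>y\<in>UNIV. trans_prob f (pw :: nat \<Rightarrow> 'w::finite pmf) t y x u (z :: 'x::finite \<Rightarrow> real)) = 1"
  unfolding pmf_map_eq_trans_prob[symmetric] by (rule sum_pmf_eq_1) auto

lemma trans_prob_le_1:
  "trans_prob f (pw :: nat \<Rightarrow> 'w::finite pmf) t y x u (z :: 'x::finite \<Rightarrow> real) \<le> 1"
  unfolding pmf_map_eq_trans_prob[symmetric] by (rule pmf_le_1)

lemma hat_f_in_Delta:
  assumes "in_Delta z"
  shows "in_Delta (hat_f f (pw :: nat \<Rightarrow> 'w::finite pmf) t (z :: 'x::finite \<Rightarrow> real) \<gamma>)"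
proof -
  have "(\<Sum>y\<in>UNIV. \<Sum>x\<in>UNIV. z x * trans_prob f pw t y x (\<gamma> x) z)
      = (\<Sum>x\<in>UNIV. z x * (\<Sum>y\<in>UNIV. trans_prob f pw t y x (\<gamma> x) z))"
    by (subst sum.swap) (simp add: sum_distrib_left)
  then show ?thesis
    using assms unfolding in_Delta_def hat_f_def
    by (auto simp: sum_trans_prob intro!: sum_nonneg mult_nonneg_nonneg trans_prob_nonneg)
qed

lemma ztraj_in_Delta: "in_Delta (ztraj f p0 pw \<psi> k)"
  by (induction k) (auto intro: hat_f_in_Delta in_Delta_pmf)

section \<open>Lipschitz continuity of the value functions\<close>

lemma Vhat_Suc_T: "Vhat T f l pw (Suc T) z = 0"
  unfolding Vhat_def by simp

lemma Vhat_le_stage: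
  assumes "t \<in> {1..T}"
  shows "Vhat T f l pw t z \<le> hat_c l t z \<gamma> + Vhat T f l pw (Suc t) (hat_f f pw t z \<gamma>)"
proof -
  have e: "T + 1 - t = Suc (T - t)" "T - (T - t) = t" "T + 1 - Suc t = T - t"
    using assms by auto
  show ?thesis unfolding Vhat_def e(1,3) Wval.simps e(2) by (rule Min_le) auto
qed

lemma lipschitz_on_I_imp_bounded:
  fixes l :: "nat \<Rightarrow> 'x::finite \<Rightarrow> 'u::finite \<Rightarrow> ('x \<Rightarrow> real) \<Rightarrow> real"
  assumes "finite A" "0 \<le> K"
    and lip: "\<And>t x u z1 z2. t \<in> A \<Longrightarrow> in_I z1 \<Longrightarrow> in_I z2 \<Longrightarrow>
      \<bar>l t x u z1 - l t x u z2\<bar> \<le> K * supnorm (z1 - z2)"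
  shows "\<exists>B\<ge>0. \<forall>t\<in>A. \<forall>x u z. in_I z \<longrightarrow> \<bar>l t x u z\<bar> \<le> B"
proof -
  define S where "S t = (\<Sum>x\<in>UNIV. \<Sum>u\<in>UNIV. \<bar>l t x u (\<lambda>_. 0)\<bar>)" for t
  have "\<bar>l t x u z\<bar> \<le> K + sum S A" if t: "t \<in> A" and z: "in_I z" for t x u z
  proof -
    have "\<bar>l t x u z - l t x u (\<lambda>_. 0)\<bar> \<le> K * supnorm (z - (\<lambda>_. 0))"
      using lip[OF t z] by (simp add: in_I_def)
    also have "\<dots> \<le> K * 1"
      using z \<open>0 \<le> K\<close> by (intro mult_left_mono supnorm_leI) (auto simp: in_I_def)
    finally have "\<bar>l t x u z\<bar> \<le> K + \<bar>l t x u (\<lambda>_. 0)\<bar>" by linarith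
    also have "\<bar>l t x u (\<lambda>_. 0)\<bar> \<le> (\<Sum>u\<in>UNIV. \<bar>l t x u (\<lambda>_. 0)\<bar>)"
      by (rule member_le_sum) auto
    also have "\<dots> \<le> S t"
      unfolding S_def by (rule member_le_sum[of x UNIV]) (auto intro: sum_nonneg)
    also have "\<dots> \<le> sum S A"
      using t \<open>finite A\<close> unfolding S_def by (intro member_le_sum) (auto intro: sum_nonneg)
    finally show ?thesis by simp
  qed
  moreover have "0 \<le> K + sum S A"
    unfolding S_def using \<open>0 \<le> K\<close> by (auto intro!: sum_nonneg add_nonneg_nonneg)
  ultimately show ?thesis by blast
qed

locale lipschitz_mf_model =
  fixes T :: nat
    and f :: "nat \<Rightarrow> 'x::finite \<Rightarrow> 'u::finite \<Rightarrow> 'w::finite \<Rightarrow> ('x \<Rightarrow> real) \<Rightarrow> 'x"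
    and l :: "nat \<Rightarrow> 'x \<Rightarrow> 'u \<Rightarrow> ('x \<Rightarrow> real) \<Rightarrow> real"
    and pw :: "nat \<Rightarrow> 'w pmf"
    and K B :: real
  assumes K_nonneg: "0 \<le> K" and B_nonneg: "0 \<le> B"
    and trans_prob_lipschitz: "\<And>t x y u z1 z2. t \<in> {1..T} \<Longrightarrow> in_I z1 \<Longrightarrow> in_I z2 \<Longrightarrow>
      \<bar>trans_prob f pw t y x u z1 - trans_prob f pw t y x u z2\<bar> \<le> K * supnorm (z1 - z2)"
    and cost_lipschitz: "\<And>t x u z1 z2. t \<in> {1..T} \<Longrightarrow> in_I z1 \<Longrightarrow> in_I z2 \<Longrightarrow>
      \<bar>l t x u z1 - l t x u z2\<bar> \<le> K * supnorm (z1 - z2)"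
    and cost_bounded: "\<And>t x u z. t \<in> {1..T} \<Longrightarrow> in_I z \<Longrightarrow> \<bar>l t x u z\<bar> \<le> B"
begin

definition cost_lip :: real where "cost_lip = real CARD('x) * (B + K)"

definition flow_lip :: real where "flow_lip = real CARD('x) * (1 + K)"

definition value_lip :: real where "value_lip = affine_iterate cost_lip flow_lip T"

lemma cost_lip_nonneg: "0 \<le> cost_lip"
  unfolding cost_lip_def using K_nonneg B_nonneg by simp

lemma flow_lip_nonneg: "0 \<le> flow_lip"
  unfolding flow_lip_def using K_nonneg by simp

lemma value_lip_nonneg: "0 \<le> value_lip"
  unfolding value_lip_def by (intro affine_iterate_nonneg cost_lip_nonneg flow_lip_nonneg)

lemma hat_c_lipschitz:
  assumes t: "t \<in> {1..T}" and z: "in_Delta z1" "in_Delta z2"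
  shows "\<bar>hat_c l t z1 \<gamma> - hat_c l t z2 \<gamma>\<bar> \<le> cost_lip * supnorm (z1 - z2)"
proof -
  have I: "in_I z1" "in_I z2" using z by (auto intro: in_Delta_imp_in_I)
  have "\<bar>hat_c l t z1 \<gamma> - hat_c l t z2 \<gamma>\<bar>
      \<le> (\<Sum>x\<in>UNIV. \<bar>z1 x * l t x (\<gamma> x) z1 - z2 x * l t x (\<gamma> x) z2\<bar>)"
    unfolding hat_c_def sum_subtractf[symmetric] by (rule sum_abs)
  also have "\<dots> \<le> (\<Sum>x\<in>(UNIV::'x set). (B + K) * supnorm (z1 - z2))"
    using abs_le_supnorm[of "z1 - z2"] cost_bounded[OF t I(1)] cost_lipschitz[OF t I] I(2)
      supnorm_nonneg[of "z1 - z2"]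
    by (intro sum_mono abs_mult_diff_le) (auto simp: in_I_def)
  finally show ?thesis by (simp add: cost_lip_def)
qed

lemma hat_f_lipschitz:
  assumes t: "t \<in> {1..T}" and z: "in_Delta z1" "in_Delta z2"
  shows "supnorm (hat_f f pw t z1 \<gamma> - hat_f f pw t z2 \<gamma>) \<le> flow_lip * supnorm (z1 - z2)"
proof (rule supnorm_leI)
  fix y
  have I: "in_I z1" "in_I z2" using z by (auto intro: in_Delta_imp_in_I)
  have "\<bar>(hat_f f pw t z1 \<gamma> - hat_f f pw t z2 \<gamma>) y\<bar>
      \<le> (\<Sum>x\<in>UNIV. \<bar>z1 x * trans_prob f pw t y x (\<gamma> x) z1 - z2 x * trans_prob f pw t y x (\<gamma> x) z2\<bar>)"
    unfolding hat_f_def fun_diff_def sum_subtractf[symmetric] by (rule sum_abs)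
  also have "\<dots> \<le> (\<Sum>x\<in>(UNIV::'x set). (1 + K) * supnorm (z1 - z2))"
    using abs_le_supnorm[of "z1 - z2"] trans_prob_lipschitz[OF t I] I(2) supnorm_nonneg[of "z1 - z2"]
      trans_prob_nonneg[of f pw t y] trans_prob_le_1[of f pw t y]
    by (intro sum_mono abs_mult_diff_le) (auto simp: in_I_def)
  finally show "\<bar>(hat_f f pw t z1 \<gamma> - hat_f f pw t z2 \<gamma>) y\<bar> \<le> flow_lip * supnorm (z1 - z2)"
    by (simp add: flow_lip_def)
qed

lemma Wval_lipschitz:
  assumes "k \<le> T" "in_Delta z1" "in_Delta z2"
  shows "\<bar>Wval T f l pw k z1 - Wval T f l pw k z2\<bar>
    \<le> affine_iterate cost_lip flow_lip k * supnorm (z1 - z2)"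
  using assms
proof (induction k arbitrary: z1 z2)
  case 0
  then show ?case by simp
next
  case (Suc k)
  have t: "T - k \<in> {1..T}" using Suc.prems by auto
  let ?s = "supnorm (z1 - z2)" and ?L = "affine_iterate cost_lip flow_lip k"
  show ?case unfolding Wval.simps
  proof (rule abs_Min_range_diff_le)
    fix \<gamma>
    let ?c = "\<lambda>z. hat_c l (T - k) z \<gamma>" and ?W = "\<lambda>z. Wval T f l pw k (hat_f f pw (T - k) z \<gamma>)"
    have "\<bar>?W z1 - ?W z2\<bar> \<le> ?L * supnorm (hat_f f pw (T - k) z1 \<gamma> - hat_f f pw (T - k) z2 \<gamma>)"
      using Suc by (intro Suc.IH hat_f_in_Delta) auto
    also have "\<dots> \<le> ?L * (flow_lip * ?s)"
      using Suc.prems cost_lip_nonneg flow_lip_nonneg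
      by (intro mult_left_mono hat_f_lipschitz t affine_iterate_nonneg) auto
    finally show "\<bar>?c z1 + ?W z1 - (?c z2 + ?W z2)\<bar> \<le> affine_iterate cost_lip flow_lip (Suc k) * ?s"
      using hat_c_lipschitz[OF t Suc.prems(2,3), of \<gamma>] abs_triangle_ineq[of "?c z1 - ?c z2" "?W z1 - ?W z2"]
      by (simp add: algebra_simps)
  qed
qed

lemma Vhat_lipschitz:
  assumes "t \<in> {1..Suc T}" "in_Delta z1" "in_Delta z2"
  shows "\<bar>Vhat T f l pw t z1 - Vhat T f l pw t z2\<bar> \<le> value_lip * supnorm (z1 - z2)"
proof -
  have "\<bar>Vhat T f l pw t z1 - Vhat T f l pw t z2\<bar>
      \<le> affine_iterate cost_lip flow_lip (T + 1 - t) * supnorm (z1 - z2)"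
    unfolding Vhat_def using assms(1) by (intro Wval_lipschitz assms(2,3)) auto
  also have "\<dots> \<le> value_lip * supnorm (z1 - z2)"
    unfolding value_lip_def using assms(1)
    by (intro mult_right_mono affine_iterate_mono cost_lip_nonneg flow_lip_nonneg supnorm_nonneg) auto
  finally show ?thesis .
qed

lemma Vhat_le_Vhat_plus_supnorm:
  assumes "t \<in> {1..Suc T}" "in_Delta z1" "in_Delta z2"
  shows "Vhat T f l pw t z1 \<le> Vhat T f l pw t z2 + value_lip * supnorm (z2 - z1)"
  using Vhat_lipschitz[OF assms(1,3,2)] by (simp add: abs_le_iff)

end

lemma lipschitz_mf_model_exists:
  fixes f :: "nat \<Rightarrow> 'x::finite \<Rightarrow> 'u::finite \<Rightarrow> 'w::finite \<Rightarrow> ('x \<Rightarrow> real) \<Rightarrow> 'x"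
  assumes lip_P: "\<forall>t\<in>{1..T}. \<exists>K>0. \<forall>x y u z1 z2. in_I z1 \<longrightarrow> in_I z2 \<longrightarrow>
      \<bar>trans_prob f pw t y x u z1 - trans_prob f pw t y x u z2\<bar> \<le> K * supnorm (z1 - z2)"
    and lip_l: "\<forall>t\<in>{1..T}. \<exists>K>0. \<forall>x u z1 z2. in_I z1 \<longrightarrow> in_I z2 \<longrightarrow>
      \<bar>l t x u z1 - l t x u z2\<bar> \<le> K * supnorm (z1 - z2)"
  shows "\<exists>K B. lipschitz_mf_model T f l pw K B"
proof -
  have mono: "a \<le> K * supnorm (z1 - z2) \<Longrightarrow> K \<le> K' \<Longrightarrow> a \<le> K' * supnorm (z1 - z2)"
    for a K K' :: real and z1 z2 :: "'x \<Rightarrow> real"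
    by (meson mult_right_mono order_trans supnorm_nonneg)
  have "\<exists>K\<ge>0. \<forall>t\<in>{1..T}. \<forall>x y u z1 z2. in_I z1 \<longrightarrow> in_I z2 \<longrightarrow>
      \<bar>trans_prob f pw t y x u z1 - trans_prob f pw t y x u z2\<bar> \<le> K * supnorm (z1 - z2)"
    by (rule ex_uniform_constant[OF finite_atLeastAtMost lip_P]) (blast intro: mono)
  then obtain KP where KP: "0 \<le> KP" "\<forall>t\<in>{1..T}. \<forall>x y u z1 z2. in_I z1 \<longrightarrow> in_I z2 \<longrightarrow>
      \<bar>trans_prob f pw t y x u z1 - trans_prob f pw t y x u z2\<bar> \<le> KP * supnorm (z1 - z2)"
    by blast
  have "\<exists>K\<ge>0. \<forall>t\<in>{1..T}. \<forall>x u z1 z2. in_I z1 \<longrightarrow> in_I z2 \<longrightarrow>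
      \<bar>l t x u z1 - l t x u z2\<bar> \<le> K * supnorm (z1 - z2)"
    by (rule ex_uniform_constant[OF finite_atLeastAtMost lip_l]) (blast intro: mono)
  then obtain KL where KL: "0 \<le> KL" "\<forall>t\<in>{1..T}. \<forall>x u z1 z2. in_I z1 \<longrightarrow> in_I z2 \<longrightarrow>
      \<bar>l t x u z1 - l t x u z2\<bar> \<le> KL * supnorm (z1 - z2)"
    by blast
  define K where "K = max KP KL"
  have K: "0 \<le> K" unfolding K_def using KP(1) by linarith
  have P: "\<bar>trans_prob f pw t y x u z1 - trans_prob f pw t y x u z2\<bar> \<le> K * supnorm (z1 - z2)"
    if "t \<in> {1..T}" "in_I z1" "in_I z2" for t x y u z1 z2
    using mono[of _ KP _ _ K] KP(2) that by (simp add: K_def)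
  have L: "\<bar>l t x u z1 - l t x u z2\<bar> \<le> K * supnorm (z1 - z2)"
    if "t \<in> {1..T}" "in_I z1" "in_I z2" for t x u z1 z2
    using mono[of _ KL _ _ K] KL(2) that by (simp add: K_def)
  have "\<exists>B\<ge>0. \<forall>t\<in>{1..T}. \<forall>x u z. in_I z \<longrightarrow> \<bar>l t x u z\<bar> \<le> B"
    by (rule lipschitz_on_I_imp_bounded[OF finite_atLeastAtMost K]) (blast intro: L)
  then obtain B where B: "0 \<le> B" "\<forall>t\<in>{1..T}. \<forall>x u z. in_I z \<longrightarrow> \<bar>l t x u z\<bar> \<le> B"
    by blast
  have "lipschitz_mf_model T f l pw K B"
    unfolding lipschitz_mf_model_def using K B P L by blast
  then show ?thesis by blast
qed

section \<open>Concentration of the empirical distribution\<close>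

lemma finite_set_Pi_pmf: "finite (set_pmf (Pi_pmf {0..<n} d (q :: nat \<Rightarrow> 'x::finite pmf)))"
  by (subst set_Pi_pmf) (auto intro!: finite_PiE_dflt)

lemma expectation_indicator_pmf:
  "measure_pmf.expectation (q::'x::finite pmf) (\<lambda>v. if v = y then 1 else 0) = pmf q y"
  by (subst integral_measure_pmf_real[of "{y}"]) (auto split: if_splits)

lemma expectation_Pi_pmf_prod_indicator:
  fixes q :: "nat \<Rightarrow> 'x::finite pmf"
  assumes "B \<subseteq> {0..<n}"
  shows "measure_pmf.expectation (Pi_pmf {0..<n} d q) (\<lambda>ys. \<Prod>k\<in>B. if ys k = y then 1 else 0)
    = (\<Prod>k\<in>B. pmf (q k) y)"
proof -
  let ?F = "\<lambda>k v. if k \<in> B then (if v = y then 1 else 0) else (1::real)"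
  have restrict: "(\<Prod>k\<in>{0..<n}. if k \<in> B then g k else 1) = (\<Prod>k\<in>B. g k)" for g :: "nat \<Rightarrow> real"
    using assms by (simp add: prod.If_cases Int_absorb1)
  have "measure_pmf.expectation (Pi_pmf {0..<n} d q) (\<lambda>ys. \<Prod>k\<in>{0..<n}. ?F k (ys k))
      = (\<Prod>k\<in>{0..<n}. measure_pmf.expectation (q k) (?F k))"
    by (rule expectation_prod_Pi_pmf) (auto intro: integrable_measure_pmf_finite)
  also have "\<dots> = (\<Prod>k\<in>{0..<n}. if k \<in> B then pmf (q k) y else 1)"
    by (rule prod.cong) (auto simp: expectation_indicator_pmf)
  finally show ?thesis by (simp only: restrict)
qed

lemma expectation_centered_indicators_mult:
  fixes q :: "nat \<Rightarrow> 'x::finite pmf"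
  assumes "i \<in> {0..<n}" "j \<in> {0..<n}" "i \<noteq> j"
  shows "measure_pmf.expectation (Pi_pmf {0..<n} d q)
    (\<lambda>ys. ((if ys i = y then 1 else 0) - pmf (q i) y) * ((if ys j = y then 1 else 0) - pmf (q j) y)) = 0"
proof -
  let ?P = "Pi_pmf {0..<n} d q" and ?I = "\<lambda>i ys. if ys i = y then 1 else (0::real)"
  have int: "integrable ?P g" for g :: "_ \<Rightarrow> real"
    by (rule integrable_measure_pmf_finite[OF finite_set_Pi_pmf])
  have single: "measure_pmf.expectation ?P (?I k) = pmf (q k) y" if "k \<in> {0..<n}" for k
    using expectation_Pi_pmf_prod_indicator[of "{k}" n d q y] that by simp
  have pair: "measure_pmf.expectation ?P (\<lambda>ys. ?I i ys * ?I j ys) = pmf (q i) y * pmf (q j) y"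
    using expectation_Pi_pmf_prod_indicator[of "{i, j}" n d q y] assms by simp
  have "(\<lambda>ys. (?I i ys - pmf (q i) y) * (?I j ys - pmf (q j) y))
      = (\<lambda>ys. ?I i ys * ?I j ys - pmf (q j) y * ?I i ys - pmf (q i) y * ?I j ys + pmf (q i) y * pmf (q j) y)"
    by (auto simp: algebra_simps)
  then show ?thesis
    using single[of i] single[of j] pair assms
    by (simp add: int Bochner_Integration.integral_diff Bochner_Integration.integral_add)
qed

lemma second_moment_centered_count:
  fixes q :: "nat \<Rightarrow> 'x::finite pmf"
  shows "measure_pmf.expectation (Pi_pmf {0..<n} d q)
    (\<lambda>ys. (\<Sum>i\<in>{0..<n}. (if ys i = y then 1 else 0) - pmf (q i) y)\<^sup>2) \<le> real n"
proof -
  let ?P = "Pi_pmf {0..<n} d q"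
  define Y where "Y i ys = (if ys i = y then 1 else 0) - pmf (q i) y" for i and ys :: "nat \<Rightarrow> 'x"
  have int: "integrable ?P g" for g :: "_ \<Rightarrow> real"
    by (rule integrable_measure_pmf_finite[OF finite_set_Pi_pmf])
  have diag: "measure_pmf.expectation ?P (\<lambda>ys. Y i ys * Y i ys) \<le> 1" for i
  proof -
    have "\<bar>Y i ys\<bar> \<le> 1" for ys unfolding Y_def by (auto simp: pmf_le_1)
    then have "Y i ys * Y i ys \<le> 1" for ys
      by (metis abs_le_square_iff abs_one mult.right_neutral power2_eq_square)
    then have "measure_pmf.expectation ?P (\<lambda>ys. Y i ys * Y i ys) \<le> measure_pmf.expectation ?P (\<lambda>_. 1)"
      by (intro integral_mono int)
    then show ?thesis by simp
  qed
  have "measure_pmf.expectation ?P (\<lambda>ys. (\<Sum>i\<in>{0..<n}. Y i ys)\<^sup>2)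
      = (\<Sum>i\<in>{0..<n}. \<Sum>j\<in>{0..<n}. measure_pmf.expectation ?P (\<lambda>ys. Y i ys * Y j ys))"
    unfolding power2_eq_square sum_product by (simp add: int Bochner_Integration.integral_sum)
  also have "\<dots> = (\<Sum>i\<in>{0..<n}. measure_pmf.expectation ?P (\<lambda>ys. Y i ys * Y i ys))"
    using expectation_centered_indicators_mult[of _ n _ d q y]
    by (intro sum.cong refl) (simp add: Y_def sum.remove[of "{0..<n}"])
  also have "\<dots> \<le> real n"
    using sum_mono[of "{0..<n}" _ "\<lambda>_. 1", OF diag] by simp
  finally show ?thesis unfolding Y_def .
qed

lemma (in prob_space) expectation_abs_le_sqrt_second_moment:
  fixes g :: "'a \<Rightarrow> real"
  assumes "integrable M g" "integrable M (\<lambda>x. (g x)\<^sup>2)"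
  shows "expectation (\<lambda>x. \<bar>g x\<bar>) \<le> sqrt (expectation (\<lambda>x. (g x)\<^sup>2))"
proof -
  have "0 \<le> variance (\<lambda>x. \<bar>g x\<bar>)" by (rule variance_positive)
  also have "\<dots> = expectation (\<lambda>x. (g x)\<^sup>2) - (expectation (\<lambda>x. \<bar>g x\<bar>))\<^sup>2"
    using assms by (subst variance_eq) auto
  finally show ?thesis by (simp add: real_le_rsqrt)
qed

lemma expectation_abs_mf_deviation:
  fixes q :: "nat \<Rightarrow> 'x::finite pmf"
  assumes n: "0 < n"
  shows "measure_pmf.expectation (Pi_pmf {0..<n} d q)
    (\<lambda>ys. \<bar>mf n ys y - (1 / real n) * (\<Sum>i\<in>{0..<n}. pmf (q i) y)\<bar>) \<le> 1 / sqrt (real n)"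
proof -
  let ?P = "Pi_pmf {0..<n} d q"
  define S where "S ys = (\<Sum>i\<in>{0..<n}. (if ys i = y then 1 else 0) - pmf (q i) y)" for ys
  have int: "integrable ?P g" for g :: "_ \<Rightarrow> real"
    by (rule integrable_measure_pmf_finite[OF finite_set_Pi_pmf])
  have "mf n ys y - (1 / real n) * (\<Sum>i\<in>{0..<n}. pmf (q i) y) = (1 / real n) * S ys" for ys
    unfolding mf_eq_average_indicator S_def by (simp add: sum_subtractf algebra_simps)
  then have "measure_pmf.expectation ?P (\<lambda>ys. \<bar>mf n ys y - (1 / real n) * (\<Sum>i\<in>{0..<n}. pmf (q i) y)\<bar>)
      = (1 / real n) * measure_pmf.expectation ?P (\<lambda>ys. \<bar>S ys\<bar>)"
    by (simp add: abs_mult)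
  also have "\<dots> \<le> (1 / real n) * sqrt (real n)"
    using measure_pmf.expectation_abs_le_sqrt_second_moment[OF int int, of S]
      second_moment_centered_count[of n d q y]
    unfolding S_def by (intro mult_left_mono) (auto intro: order_trans)
  also have "\<dots> = 1 / sqrt (real n)"
    using n by (simp add: field_simps real_div_sqrt)
  finally show ?thesis .
qed

lemma expectation_supnorm_mf_deviation:
  fixes q :: "nat \<Rightarrow> 'x::finite pmf"
  assumes n: "0 < n"
  shows "measure_pmf.expectation (Pi_pmf {0..<n} d q)
    (\<lambda>ys. supnorm (mf n ys - (\<lambda>y. (1 / real n) * (\<Sum>i\<in>{0..<n}. pmf (q i) y))))
      \<le> real CARD('x) / sqrt (real n)"
proof -
  let ?P = "Pi_pmf {0..<n} d q" and ?dev = "\<lambda>ys y. \<bar>mf n ys y - (1 / real n) * (\<Sum>i\<in>{0..<n}. pmf (q i) y)\<bar>"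
  have int: "integrable ?P g" for g :: "_ \<Rightarrow> real"
    by (rule integrable_measure_pmf_finite[OF finite_set_Pi_pmf])
  have "measure_pmf.expectation ?P (\<lambda>ys. supnorm (mf n ys - (\<lambda>y. (1 / real n) * (\<Sum>i\<in>{0..<n}. pmf (q i) y))))
      \<le> measure_pmf.expectation ?P (\<lambda>ys. \<Sum>y\<in>UNIV. ?dev ys y)"
    using supnorm_le_sum_abs by (intro integral_mono int) (simp add: fun_diff_def)
  also have "\<dots> = (\<Sum>y\<in>UNIV. measure_pmf.expectation ?P (\<lambda>ys. ?dev ys y))"
    by (simp add: int Bochner_Integration.integral_sum)
  also have "\<dots> \<le> (\<Sum>y\<in>(UNIV::'x set). 1 / sqrt (real n))"
    by (intro sum_mono expectation_abs_mf_deviation n)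
  finally show ?thesis by simp
qed

section \<open>The n-agent system\<close>

definition next_state_dist ::
  "(nat \<Rightarrow> 'x \<Rightarrow> 'u \<Rightarrow> 'w \<Rightarrow> ('x \<Rightarrow> real) \<Rightarrow> 'x) \<Rightarrow> (nat \<Rightarrow> 'w pmf) \<Rightarrow> nat \<Rightarrow> nat
     \<Rightarrow> ('x \<Rightarrow> 'u) \<Rightarrow> (nat \<Rightarrow> 'x) \<Rightarrow> (nat \<Rightarrow> 'x) pmf" where
  "next_state_dist f pw n t \<gamma> xs =
     Pi_pmf {0..<n} undefined (\<lambda>i. map_pmf (\<lambda>w. f t (xs i) (\<gamma> (xs i)) w (mf n xs)) (pw t))"

lemma state_dist_Suc_eq_bind:
  "state_dist f p0 pw n h (Suc k) = bind_pmf (state_dist f p0 pw n h k)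
     (\<lambda>xs. next_state_dist f pw n (Suc k) (\<lambda>x. h (Suc k) x (mf n xs)) xs)"
  by (simp add: next_state_dist_def)

lemma finite_set_state_dist:
  "finite (set_pmf (state_dist (f :: nat \<Rightarrow> 'x::finite \<Rightarrow> 'u \<Rightarrow> 'w \<Rightarrow> ('x \<Rightarrow> real) \<Rightarrow> 'x) p0 pw n h k))"
  by (induction k) (auto simp: finite_set_Pi_pmf)

lemma integrable_state_dist:
  "integrable (state_dist (f :: nat \<Rightarrow> 'x::finite \<Rightarrow> 'u \<Rightarrow> 'w \<Rightarrow> ('x \<Rightarrow> real) \<Rightarrow> 'x) p0 pw n h k)
     (g :: _ \<Rightarrow> real)"
  by (rule integrable_measure_pmf_finite[OF finite_set_state_dist])

lemma integrable_next_state_dist: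
  "integrable (next_state_dist (f :: nat \<Rightarrow> 'x::finite \<Rightarrow> 'u \<Rightarrow> 'w \<Rightarrow> ('x \<Rightarrow> real) \<Rightarrow> 'x) pw n t \<gamma> xs)
     (g :: _ \<Rightarrow> real)"
  unfolding next_state_dist_def by (rule integrable_measure_pmf_finite[OF finite_set_Pi_pmf])

lemma expectation_state_dist_Suc:
  fixes f :: "nat \<Rightarrow> 'x::finite \<Rightarrow> 'u \<Rightarrow> 'w \<Rightarrow> ('x \<Rightarrow> real) \<Rightarrow> 'x" and H :: "(nat \<Rightarrow> 'x) \<Rightarrow> real"
  shows "measure_pmf.expectation (state_dist f p0 pw n h (Suc k)) H
    = measure_pmf.expectation (state_dist f p0 pw n h k) (\<lambda>xs.
        measure_pmf.expectation (next_state_dist f pw n (Suc k) (\<lambda>x. h (Suc k) x (mf n xs)) xs) H)"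
proof -
  let ?S = "state_dist f p0 pw n h k"
    and ?Q = "\<lambda>xs. next_state_dist f pw n (Suc k) (\<lambda>x. h (Suc k) x (mf n xs)) xs"
  have "measure_pmf.expectation (bind_pmf ?S ?Q) H
      = (\<Sum>xs\<in>set_pmf ?S. pmf ?S xs *\<^sub>R measure_pmf.expectation (?Q xs) H)"
    by (rule pmf_expectation_bind)
      (auto simp: finite_set_state_dist next_state_dist_def finite_set_Pi_pmf)
  also have "\<dots> = measure_pmf.expectation ?S (\<lambda>xs. measure_pmf.expectation (?Q xs) H)"
    by (subst integral_measure_pmf_real[OF finite_set_state_dist]) (auto simp: mult.commute)
  finally show ?thesis by (simp only: state_dist_Suc_eq_bind)
qed

lemma Jcost_eq_sum_expected_hat_c:
  "Jcost T (f :: nat \<Rightarrow> 'x::finite \<Rightarrow> 'u \<Rightarrow> 'w \<Rightarrow> ('x \<Rightarrow> real) \<Rightarrow> 'x) l p0 pw n h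
    = (\<Sum>k<T. measure_pmf.expectation (state_dist f p0 pw n h k)
         (\<lambda>xs. hat_c l (Suc k) (mf n xs) (\<lambda>x. h (Suc k) x (mf n xs))))"
  unfolding Jcost_def hat_c_mf_eq_average by (simp add: sum.atLeast1_atMost_eq)

lemma expectation_supnorm_initial_mf_deviation:
  fixes f :: "nat \<Rightarrow> 'x::finite \<Rightarrow> 'u \<Rightarrow> 'w \<Rightarrow> ('x \<Rightarrow> real) \<Rightarrow> 'x"
  assumes "0 < n"
  shows "measure_pmf.expectation (state_dist f p0 pw n h 0) (\<lambda>xs. supnorm (mf n xs - pmf p0))
    \<le> real CARD('x) / sqrt (real n)"
  using expectation_supnorm_mf_deviation[OF assms, of undefined "\<lambda>_. p0"] assms by simp

lemma expectation_supnorm_next_mf_deviation: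
  fixes f :: "nat \<Rightarrow> 'x::finite \<Rightarrow> 'u \<Rightarrow> 'w::finite \<Rightarrow> ('x \<Rightarrow> real) \<Rightarrow> 'x"
  assumes "0 < n"
  shows "measure_pmf.expectation (next_state_dist f pw n t \<gamma> xs)
    (\<lambda>ys. supnorm (mf n ys - hat_f f pw t (mf n xs) \<gamma>)) \<le> real CARD('x) / sqrt (real n)"
proof -
  have "(\<lambda>y. (1 / real n) * (\<Sum>i\<in>{0..<n}. pmf (map_pmf (\<lambda>w. f t (xs i) (\<gamma> (xs i)) w (mf n xs)) (pw t)) y))
      = hat_f f pw t (mf n xs) \<gamma>"
    unfolding pmf_map_eq_trans_prob hat_f_def by (rule ext) (rule average_eq_sum_mf)
  then show ?thesis
    using expectation_supnorm_mf_deviation[OF assms, of undefined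
        "\<lambda>i. map_pmf (\<lambda>w. f t (xs i) (\<gamma> (xs i)) w (mf n xs)) (pw t)"]
    unfolding next_state_dist_def by simp
qed

section \<open>Comparison with the deterministic problem\<close>

definition decentralized_strategy ::
  "(nat \<Rightarrow> 'x::finite \<Rightarrow> 'u \<Rightarrow> 'w::finite \<Rightarrow> ('x \<Rightarrow> real) \<Rightarrow> 'x) \<Rightarrow> 'x pmf \<Rightarrow> (nat \<Rightarrow> 'w pmf)
     \<Rightarrow> (nat \<Rightarrow> ('x \<Rightarrow> real) \<Rightarrow> ('x \<Rightarrow> 'u)) \<Rightarrow> nat \<Rightarrow> 'x \<Rightarrow> ('x \<Rightarrow> real) \<Rightarrow> 'u" where
  "decentralized_strategy f p0 pw \<psi> = (\<lambda>t x m. \<psi> t (ztraj f p0 pw \<psi> (t - 1)) x)"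

lemma decentralized_strategy_Suc [simp]:
  "decentralized_strategy f p0 pw \<psi> (Suc k) x m = \<psi> (Suc k) (ztraj f p0 pw \<psi> k) x"
  by (simp add: decentralized_strategy_def)

lemma Vhat_ztraj_eq_sum_hat_c:
  assumes psi_min: "\<And>t z. t \<in> {1..T} \<Longrightarrow> in_Delta z \<Longrightarrow>
      hat_c l t z (\<psi> t z) + Vhat T f l pw (t + 1) (hat_f f pw t z (\<psi> t z)) = Vhat T f l pw t z"
  shows "Vhat T f l pw 1 (pmf p0)
    = (\<Sum>k<T. hat_c l (Suc k) (ztraj f p0 pw \<psi> k) (\<psi> (Suc k) (ztraj f p0 pw \<psi> k)))"
proof -
  have "Vhat T f l pw 1 (pmf p0)
      = (\<Sum>k<j. hat_c l (Suc k) (ztraj f p0 pw \<psi> k) (\<psi> (Suc k) (ztraj f p0 pw \<psi> k)))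
        + Vhat T f l pw (Suc j) (ztraj f p0 pw \<psi> j)" if "j \<le> T" for j
    using that
  proof (induction j)
    case 0
    then show ?case by (simp add: fun_eq_iff)
  next
    case (Suc j)
    then show ?case
      using psi_min[of "Suc j" "ztraj f p0 pw \<psi> j"] by (simp add: ztraj_in_Delta)
  qed
  from this[of T] show ?thesis by (simp add: Vhat_Suc_T)
qed

context lipschitz_mf_model
begin

lemma expectation_supnorm_next_mf_hat_f_le:
  assumes n: "0 < n" and t: "t \<in> {1..T}" and z: "in_Delta z"
  shows "measure_pmf.expectation (next_state_dist f pw n t \<gamma> xs)
      (\<lambda>ys. supnorm (mf n ys - hat_f f pw t z \<gamma>))
    \<le> real CARD('x) / sqrt (real n) + flow_lip * supnorm (mf n xs - z)"
proof -
  let ?Q = "next_state_dist f pw n t \<gamma> xs" and ?F = "hat_f f pw t (mf n xs) \<gamma>"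
  have "measure_pmf.expectation ?Q (\<lambda>ys. supnorm (mf n ys - hat_f f pw t z \<gamma>))
      \<le> measure_pmf.expectation ?Q (\<lambda>ys. supnorm (mf n ys - ?F) + supnorm (?F - hat_f f pw t z \<gamma>))"
    by (intro integral_mono integrable_next_state_dist supnorm_triangle)
  also have "\<dots> = measure_pmf.expectation ?Q (\<lambda>ys. supnorm (mf n ys - ?F)) + supnorm (?F - hat_f f pw t z \<gamma>)"
    by (simp add: integrable_next_state_dist)
  also have "\<dots> \<le> real CARD('x) / sqrt (real n) + flow_lip * supnorm (mf n xs - z)"
    by (intro add_mono expectation_supnorm_next_mf_deviation hat_f_lipschitz n t z mf_in_Delta)
  finally show ?thesis .
qed

lemma Vhat_mf_le_step:
  assumes n: "0 < n" and t: "t \<in> {1..T}"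
  shows "Vhat T f l pw t (mf n xs) \<le> hat_c l t (mf n xs) \<gamma>
    + measure_pmf.expectation (next_state_dist f pw n t \<gamma> xs) (\<lambda>ys. Vhat T f l pw (Suc t) (mf n ys))
    + value_lip * real CARD('x) / sqrt (real n)"
proof -
  let ?Q = "next_state_dist f pw n t \<gamma> xs" and ?F = "hat_f f pw t (mf n xs) \<gamma>"
  have "Vhat T f l pw (Suc t) ?F = measure_pmf.expectation ?Q (\<lambda>_. Vhat T f l pw (Suc t) ?F)"
    by simp
  also have "\<dots> \<le> measure_pmf.expectation ?Q
      (\<lambda>ys. Vhat T f l pw (Suc t) (mf n ys) + value_lip * supnorm (mf n ys - ?F))"
    using t n by (intro integral_mono integrable_next_state_dist Vhat_le_Vhat_plus_supnorm
        mf_in_Delta hat_f_in_Delta) auto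
  also have "\<dots> = measure_pmf.expectation ?Q (\<lambda>ys. Vhat T f l pw (Suc t) (mf n ys))
      + value_lip * measure_pmf.expectation ?Q (\<lambda>ys. supnorm (mf n ys - ?F))"
    by (simp add: integrable_next_state_dist)
  also have "\<dots> \<le> measure_pmf.expectation ?Q (\<lambda>ys. Vhat T f l pw (Suc t) (mf n ys))
      + value_lip * (real CARD('x) / sqrt (real n))"
    by (intro add_left_mono mult_left_mono expectation_supnorm_next_mf_deviation n value_lip_nonneg)
  finally show ?thesis
    using Vhat_le_stage[OF t, of f l pw "mf n xs" \<gamma>] by simp
qed

lemma Vhat_le_expected_cost_to_go:
  assumes n: "0 < n" and "k \<le> T"
  shows "Vhat T f l pw 1 (pmf p0)
    \<le> (\<Sum>i<k. measure_pmf.expectation (state_dist f p0 pw n h i)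
          (\<lambda>xs. hat_c l (Suc i) (mf n xs) (\<lambda>x. h (Suc i) x (mf n xs))))
      + measure_pmf.expectation (state_dist f p0 pw n h k) (\<lambda>xs. Vhat T f l pw (Suc k) (mf n xs))
      + real (Suc k) * (value_lip * real CARD('x) / sqrt (real n))"
  using \<open>k \<le> T\<close>
proof (induction k)
  case 0
  let ?S = "state_dist f p0 pw n h 0"
  have "Vhat T f l pw 1 (pmf p0) = measure_pmf.expectation ?S (\<lambda>_. Vhat T f l pw 1 (pmf p0))"
    by simp
  also have "\<dots> \<le> measure_pmf.expectation ?S
      (\<lambda>xs. Vhat T f l pw 1 (mf n xs) + value_lip * supnorm (mf n xs - pmf p0))"
    using n by (intro integral_mono integrable_state_dist Vhat_le_Vhat_plus_supnorm
        mf_in_Delta in_Delta_pmf) auto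
  also have "\<dots> = measure_pmf.expectation ?S (\<lambda>xs. Vhat T f l pw 1 (mf n xs))
      + value_lip * measure_pmf.expectation ?S (\<lambda>xs. supnorm (mf n xs - pmf p0))"
    by (simp add: integrable_state_dist del: state_dist.simps)
  also have "\<dots> \<le> measure_pmf.expectation ?S (\<lambda>xs. Vhat T f l pw 1 (mf n xs))
      + value_lip * (real CARD('x) / sqrt (real n))"
    by (intro add_left_mono mult_left_mono expectation_supnorm_initial_mf_deviation n value_lip_nonneg)
  finally show ?case by simp
next
  case (Suc k)
  let ?S = "state_dist f p0 pw n h k" and ?\<gamma> = "\<lambda>xs x. h (Suc k) x (mf n xs)"
  let ?c = "\<lambda>xs. hat_c l (Suc k) (mf n xs) (?\<gamma> xs)"
    and ?V = "\<lambda>j xs. Vhat T f l pw j (mf n xs)" and ?e = "value_lip * real CARD('x) / sqrt (real n)"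
  have "measure_pmf.expectation ?S (?V (Suc k))
      \<le> measure_pmf.expectation ?S (\<lambda>xs. ?c xs
          + measure_pmf.expectation (next_state_dist f pw n (Suc k) (?\<gamma> xs) xs) (?V (Suc (Suc k))) + ?e)"
    using Suc.prems by (intro integral_mono integrable_state_dist Vhat_mf_le_step n) auto
  also have "\<dots> = measure_pmf.expectation ?S ?c
      + measure_pmf.expectation (state_dist f p0 pw n h (Suc k)) (?V (Suc (Suc k))) + ?e"
    by (simp add: integrable_state_dist expectation_state_dist_Suc del: state_dist.simps)
  finally have step: "measure_pmf.expectation ?S (?V (Suc k)) \<le> measure_pmf.expectation ?S ?c
      + measure_pmf.expectation (state_dist f p0 pw n h (Suc k)) (?V (Suc (Suc k))) + ?e" .
  have "Vhat T f l pw 1 (pmf p0) \<le> (\<Sum>i<k. measure_pmf.expectation (state_dist f p0 pw n h i)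
        (\<lambda>xs. hat_c l (Suc i) (mf n xs) (\<lambda>x. h (Suc i) x (mf n xs))))
      + measure_pmf.expectation ?S (?V (Suc k)) + real (Suc k) * ?e"
    using Suc by simp
  with step show ?case
    by (simp only: sum.lessThan_Suc of_nat_Suc[of "Suc k"] distrib_right mult_1_left)
qed

lemma Jcost_lower_bound:
  assumes "0 < n"
  shows "Vhat T f l pw 1 (pmf p0) - real (Suc T) * value_lip * real CARD('x) / sqrt (real n)
    \<le> Jcost T f l p0 pw n h"
  using Vhat_le_expected_cost_to_go[OF assms, of T p0 h]
  by (simp add: Vhat_Suc_T Jcost_eq_sum_expected_hat_c)

lemma expectation_supnorm_mf_ztraj_le:
  assumes n: "0 < n" and "k \<le> T"
  shows "measure_pmf.expectation (state_dist f p0 pw n (decentralized_strategy f p0 pw \<psi>) k)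
      (\<lambda>xs. supnorm (mf n xs - ztraj f p0 pw \<psi> k))
    \<le> affine_iterate (real CARD('x)) flow_lip (Suc k) / sqrt (real n)"
  using \<open>k \<le> T\<close>
proof (induction k)
  case 0
  then show ?case
    using expectation_supnorm_initial_mf_deviation[OF n, of f p0 pw] by (simp add: fun_diff_def)
next
  case (Suc k)
  let ?S = "state_dist f p0 pw n (decentralized_strategy f p0 pw \<psi>)" and ?z = "ztraj f p0 pw \<psi>"
  have "measure_pmf.expectation (?S (Suc k)) (\<lambda>ys. supnorm (mf n ys - ?z (Suc k)))
      \<le> measure_pmf.expectation (?S k)
          (\<lambda>xs. real CARD('x) / sqrt (real n) + flow_lip * supnorm (mf n xs - ?z k))"
    unfolding expectation_state_dist_Suc using Suc.prems
    by (intro integral_mono integrable_state_dist)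
      (auto intro: expectation_supnorm_next_mf_hat_f_le[OF n, simplified] ztraj_in_Delta)
  also have "\<dots> = real CARD('x) / sqrt (real n)
      + flow_lip * measure_pmf.expectation (?S k) (\<lambda>xs. supnorm (mf n xs - ?z k))"
    by (simp add: integrable_state_dist)
  also have "\<dots> \<le> real CARD('x) / sqrt (real n)
      + flow_lip * (affine_iterate (real CARD('x)) flow_lip (Suc k) / sqrt (real n))"
    using Suc.IH[OF Suc_leD[OF Suc.prems]] by (intro add_left_mono mult_left_mono flow_lip_nonneg)
  also have "\<dots> = affine_iterate (real CARD('x)) flow_lip (Suc (Suc k)) / sqrt (real n)"
    by (simp add: add_divide_distrib distrib_left)
  finally show ?case .
qed

lemma expectation_hat_c_mf_le_hat_c_ztraj:
  assumes n: "0 < n" and "k < T"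
  shows "measure_pmf.expectation (state_dist f p0 pw n (decentralized_strategy f p0 pw \<psi>) k)
      (\<lambda>xs. hat_c l (Suc k) (mf n xs) \<gamma>)
    \<le> hat_c l (Suc k) (ztraj f p0 pw \<psi> k) \<gamma>
      + cost_lip * affine_iterate (real CARD('x)) flow_lip (Suc k) / sqrt (real n)"
proof -
  let ?S = "state_dist f p0 pw n (decentralized_strategy f p0 pw \<psi>) k" and ?z = "ztraj f p0 pw \<psi> k"
  have t: "Suc k \<in> {1..T}" using \<open>k < T\<close> by auto
  have "hat_c l (Suc k) (mf n xs) \<gamma> \<le> hat_c l (Suc k) ?z \<gamma> + cost_lip * supnorm (mf n xs - ?z)" for xs
    using hat_c_lipschitz[OF t mf_in_Delta[OF n, of xs] ztraj_in_Delta[of f p0 pw \<psi> k], of \<gamma>]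
    by (simp add: abs_le_iff)
  then have "measure_pmf.expectation ?S (\<lambda>xs. hat_c l (Suc k) (mf n xs) \<gamma>)
      \<le> measure_pmf.expectation ?S (\<lambda>xs. hat_c l (Suc k) ?z \<gamma> + cost_lip * supnorm (mf n xs - ?z))"
    by (intro integral_mono integrable_state_dist)
  also have "\<dots> = hat_c l (Suc k) ?z \<gamma> + cost_lip * measure_pmf.expectation ?S (\<lambda>xs. supnorm (mf n xs - ?z))"
    by (simp add: integrable_state_dist)
  also have "\<dots> \<le> hat_c l (Suc k) ?z \<gamma>
      + cost_lip * (affine_iterate (real CARD('x)) flow_lip (Suc k) / sqrt (real n))"
    using \<open>k < T\<close> by (intro add_left_mono mult_left_mono expectation_supnorm_mf_ztraj_le n cost_lip_nonneg) auto
  finally show ?thesis by simp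
qed

lemma Jcost_decentralized_upper_bound:
  assumes n: "0 < n"
    and psi_min: "\<And>t z. t \<in> {1..T} \<Longrightarrow> in_Delta z \<Longrightarrow>
      hat_c l t z (\<psi> t z) + Vhat T f l pw (t + 1) (hat_f f pw t z (\<psi> t z)) = Vhat T f l pw t z"
  shows "Jcost T f l p0 pw n (decentralized_strategy f p0 pw \<psi>)
    \<le> Vhat T f l pw 1 (pmf p0)
      + cost_lip * (\<Sum>k<T. affine_iterate (real CARD('x)) flow_lip (Suc k)) / sqrt (real n)"
proof -
  let ?z = "ztraj f p0 pw \<psi>" and ?A = "\<lambda>k. affine_iterate (real CARD('x)) flow_lip (Suc k)"
  have "Jcost T f l p0 pw n (decentralized_strategy f p0 pw \<psi>)
      = (\<Sum>k<T. measure_pmf.expectation (state_dist f p0 pw n (decentralized_strategy f p0 pw \<psi>) k)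
          (\<lambda>xs. hat_c l (Suc k) (mf n xs) (\<psi> (Suc k) (?z k))))"
    by (simp add: Jcost_eq_sum_expected_hat_c)
  also have "\<dots> \<le> (\<Sum>k<T. hat_c l (Suc k) (?z k) (\<psi> (Suc k) (?z k)) + cost_lip * ?A k / sqrt (real n))"
    by (intro sum_mono expectation_hat_c_mf_le_hat_c_ztraj n) auto
  also have "\<dots> = (\<Sum>k<T. hat_c l (Suc k) (?z k) (\<psi> (Suc k) (?z k)))
      + cost_lip * (\<Sum>k<T. ?A k) / sqrt (real n)"
    by (simp add: sum.distrib sum_distrib_left sum_divide_distrib del: affine_iterate.simps)
  also have "\<dots> = Vhat T f l pw 1 (pmf p0) + cost_lip * (\<Sum>k<T. ?A k) / sqrt (real n)"
    by (simp only: Vhat_ztraj_eq_sum_hat_c[OF psi_min])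
  finally show ?thesis .
qed

end

theorem theorem1:
  fixes T :: nat
    and f :: "nat \<Rightarrow> 'x::finite \<Rightarrow> 'u::finite \<Rightarrow> 'w::finite \<Rightarrow> ('x \<Rightarrow> real) \<Rightarrow> 'x"
    and l :: "nat \<Rightarrow> 'x \<Rightarrow> 'u \<Rightarrow> ('x \<Rightarrow> real) \<Rightarrow> real"
    and p0 :: "'x pmf"
    and pw :: "nat \<Rightarrow> 'w pmf"
    and \<psi> :: "nat \<Rightarrow> ('x \<Rightarrow> real) \<Rightarrow> ('x \<Rightarrow> 'u)"
  assumes cost_nonneg: "\<And>t x u z. in_I z \<Longrightarrow> 0 \<le> l t x u z"
    and lip_P: "\<forall>t\<in>{1..T}. \<exists>K>0. \<forall>x y u z1 z2. in_I z1 \<longrightarrow> in_I z2 \<longrightarrow>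
                 \<bar>trans_prob f pw t y x u z1 - trans_prob f pw t y x u z2\<bar> \<le> K * supnorm (z1 - z2)"
    and lip_l: "\<forall>t\<in>{1..T}. \<exists>K>0. \<forall>x u z1 z2. in_I z1 \<longrightarrow> in_I z2 \<longrightarrow>
                 \<bar>l t x u z1 - l t x u z2\<bar> \<le> K * supnorm (z1 - z2)"
    and psi_min: "\<And>t z. t \<in> {1..T} \<Longrightarrow> in_Delta z \<Longrightarrow>
                 hat_c l t z (\<psi> t z) + Vhat T f l pw (t + 1) (hat_f f pw t z (\<psi> t z))
                   = Vhat T f l pw t z"
  shows "\<exists>C. \<forall>n\<ge>1.
           \<bar>Jcost T f l p0 pw n (\<lambda>t x m. \<psi> t (ztraj f p0 pw \<psi> (t - 1)) x)
              - Jstar T f l p0 pw n\<bar> \<le> C / sqrt (real n)"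
proof -
  obtain K B where "lipschitz_mf_model T f l pw K B"
    using lipschitz_mf_model_exists[OF lip_P lip_l] by blast
  then interpret lipschitz_mf_model T f l pw K B .
  define C1 where "C1 = real (Suc T) * value_lip * real CARD('x)"
  define C2 where "C2 = cost_lip * (\<Sum>k<T. affine_iterate (real CARD('x)) flow_lip (Suc k))"
  show ?thesis
  proof (intro exI[of _ "C1 + C2"] allI impI)
    fix n :: nat
    assume "1 \<le> n"
    then have n: "0 < n" by simp
    let ?g = "\<lambda>t x m. \<psi> t (ztraj f p0 pw \<psi> (t - 1)) x" and ?V = "Vhat T f l pw 1 (pmf p0)"
    have lower: "?V - C1 / sqrt (real n) \<le> Jcost T f l p0 pw n h" for h
      using Jcost_lower_bound[OF n] unfolding C1_def by simp
    have "bdd_below (range (Jcost T f l p0 pw n))"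
      by (rule bdd_belowI2) (rule lower)
    then have "Jstar T f l p0 pw n \<le> Jcost T f l p0 pw n ?g"
      unfolding Jstar_def by (rule cINF_lower) simp
    moreover have "?V - C1 / sqrt (real n) \<le> Jstar T f l p0 pw n"
      unfolding Jstar_def by (rule cINF_greatest) (blast intro: lower)+
    moreover have "Jcost T f l p0 pw n ?g \<le> ?V + C2 / sqrt (real n)"
      using Jcost_decentralized_upper_bound[OF n psi_min] unfolding C2_def decentralized_strategy_def .
    ultimately show "\<bar>Jcost T f l p0 pw n ?g - Jstar T f l p0 pw n\<bar> \<le> (C1 + C2) / sqrt (real n)"
      by (simp add: add_divide_distrib)
  qed
qed

end
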